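(* Under the standing assumptions, let $u\in X\setminus\{0\}$ and $\zeta\in X^*$. Then $u$ is a $p$-eigenvector of $J$ with subgradient $\zeta$ (and eigenvalue $\lambda=R(u)$) if and only if all of the following hold: (i) $\zeta\in\partial J(u)$; (ii) $\langle\zeta,u-v\rangle\ge0$ for all $v\in X$ with $|v|_H\le|u|_H$; (iii) $|\zeta|_{H^*}\,|u|_H=pJ(u)$. Moreover, condition (ii) implies $\langle\zeta,u\rangle=|\zeta|_{H^*}|u|_H$.
   Context: Standing assumptions: $X$ is a real reflexive Banach space with dual $X^*$ and duality pairing $\langle\cdot,\cdot\rangle$; $\Gamma_0(X)$ is the class of proper, lower semi-continuous, convex functionals $X\to\mathbb{R}\cup\{+\infty\}$. Fix $1<p<\infty$ and $q=\frac{p}{p-1}$. Let $J\in\Gamma_0(X)$, and let $H\in\Gamma_0(X)$ be absolutely $p$-homogeneous ($H(tu)=|t|^pH(u)$) such that $|u|_H:=(pH(u))^{1/p}$ is a norm on $X$, so $H(u)=\frac1p|u|_H^p$. The dual norm is $|\zeta|_{H^*}=\sup_{u\ne0}\langle\zeta,u\rangle/|u|_H$, and $H^*(\zeta)=\frac1q|\zeta|_{H^*}^q$. The subdifferential is $\partial J(u)=\{\zeta\in X^*:\ J(u)+\langle\zeta,v-u\rangle\le J(v)\ \forall v\in X\}$. Growth assumption: there is $c>0$ with $H(u)\le cJ(u)$ for all $u\in X$. The Rayleigh quotient is $R(u)=J(u)/H(u)$ for $u\ne0$. A $p$-eigenvector of $J$: $u\in X\setminus\{0\}$ with subgradient $\zeta\in\partial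 J(u)$ and eigenvalue $\lambda=R(u)\in\mathbb{R}$ such that $\zeta\in\lambda\,\partial H(u)$. *)

theory Defs
  imports "HOL-Analysis.Analysis"
begin

text \<open>The real Banach space X is a type 'a of class banach; its dual X* is the
type of bounded linear functionals ('a \<Rightarrow>L real); the duality pairing is
blinfun_apply.\<close>

definition reflexive_space :: "'a::real_normed_vector itself \<Rightarrow> bool" where
  "reflexive_space _ \<longleftrightarrow>
     (\<forall>\<Phi> :: ('a \<Rightarrow>\<^sub>L real) \<Rightarrow>\<^sub>L real. \<exists>x::'a.
        \<forall>f. blinfun_apply \<Phi> f = blinfun_apply f x)"

definition proper_fun :: "('a \<Rightarrow> ereal) \<Rightarrow> bool" where
  "proper_fun J \<longleftrightarrow> (\<forall>x. J x \<noteq> -\<infinity>) \<and> (\<exists>x. J x \<noteq> \<infinity>)"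

definition lsc_fun :: "('a::topological_space \<Rightarrow> ereal) \<Rightarrow> bool" where
  "lsc_fun J \<longleftrightarrow> (\<forall>x t. t < J x \<longrightarrow> (\<forall>\<^sub>F y in nhds x. t < J y))"

definition convex_fun :: "('a::real_vector \<Rightarrow> ereal) \<Rightarrow> bool" where
  "convex_fun J \<longleftrightarrow> (\<forall>x y t. 0 \<le> t \<and> t \<le> 1 \<longrightarrow>
      J (t *\<^sub>R x + (1 - t) *\<^sub>R y) \<le> ereal t * J x + ereal (1 - t) * J y)"

definition Gamma0 :: "('a::real_normed_vector \<Rightarrow> ereal) \<Rightarrow> bool" where
  "Gamma0 J \<longleftrightarrow> proper_fun J \<and> lsc_fun J \<and> convex_fun J"

definition is_norm_on :: "('a::real_vector \<Rightarrow> real) \<Rightarrow> bool" where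
  "is_norm_on N \<longleftrightarrow> (\<forall>x. N x = 0 \<longleftrightarrow> x = 0) \<and> (\<forall>x y. N (x + y) \<le> N x + N y)
     \<and> (\<forall>c x. N (c *\<^sub>R x) = \<bar>c\<bar> * N x)"

definition subdiff :: "('a::real_normed_vector \<Rightarrow> ereal) \<Rightarrow> 'a \<Rightarrow> ('a \<Rightarrow>\<^sub>L real) set" where
  "subdiff J u = {\<zeta>. \<forall>v. J u + ereal (blinfun_apply \<zeta> (v - u)) \<le> J v}"

definition Hnorm :: "real \<Rightarrow> ('a \<Rightarrow> real) \<Rightarrow> 'a \<Rightarrow> real" where
  "Hnorm p H u = (p * H u) powr (1 / p)"

definition Hdualnorm :: "real \<Rightarrow> ('a::real_normed_vector \<Rightarrow> real) \<Rightarrow> ('a \<Rightarrow>\<^sub>L real) \<Rightarrow> ereal" where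
  "Hdualnorm p H \<zeta> = (SUP u \<in> - {0}. ereal (blinfun_apply \<zeta> u / Hnorm p H u))"

definition Rayleigh :: "('a \<Rightarrow> ereal) \<Rightarrow> ('a \<Rightarrow> real) \<Rightarrow> 'a \<Rightarrow> ereal" where
  "Rayleigh J H u = J u / ereal (H u)"

definition p_eigenvector :: "('a::real_normed_vector \<Rightarrow> ereal) \<Rightarrow> ('a \<Rightarrow> real) \<Rightarrow> 'a \<Rightarrow> ('a \<Rightarrow>\<^sub>L real) \<Rightarrow> bool" where
  "p_eigenvector J H u \<zeta> \<longleftrightarrow> u \<noteq> 0 \<and> \<zeta> \<in> subdiff J u \<and>
     (\<exists>lam::real. Rayleigh J H u = ereal lam \<and> \<zeta> \<in> (\<lambda>\<eta>. lam *\<^sub>R \<eta>) ` subdiff (\<lambda>x. ereal (H x)) u)"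

end

theory Submission
  imports Defs
begin

text \<open>
  For a norm N and H = N^p/p, the subgradients of H at u \<noteq> 0 are exactly the
  functionals \<eta> with \<eta>(u) = N(u)^p that attain their dual norm at u: the first
  condition is Euler's identity for the p-homogeneous H (differentiate t \<mapsto> H(tu)
  at t = 1), the second says that \<eta> supports the N-ball through u, and conversely
  Young's inequality turns the two conditions back into the subgradient inequality.
  Hence \<zeta> \<in> \<lambda> \<partial>H(u) with \<lambda> = J(u)/H(u), which is positive by the growth bound, says
  that \<zeta> attains its dual norm at u (equivalently (ii)) and that
  \<zeta>(u) = \<lambda> p H(u) = p J(u); given (ii), \<zeta>(u) = |\<zeta>|_H* |u|_H, so this is (iii).
\<close>

lemma convex_fun_even_nonneg:
  fixes f :: "'a::real_vector \<Rightarrow> real"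
  assumes "convex_fun (\<lambda>x. ereal (f x))" and "f (- x) = f x" and "f 0 = 0"
  shows "0 \<le> f x"
  using assms(1)[unfolded convex_fun_def, rule_format, of "1/2" x "- x"] assms(2,3)
  by simp

lemma Hnorm_powr:
  assumes "0 < p" and "0 \<le> H x"
  shows "Hnorm p H x powr p / p = H x"
  using assms by (simp add: Hnorm_def powr_powr)

lemma is_norm_on_zero:
  assumes "is_norm_on N"
  shows "N 0 = 0"
  using assms by (simp add: is_norm_on_def)

lemma is_norm_on_scaleR:
  assumes "is_norm_on N"
  shows "N (c *\<^sub>R x) = \<bar>c\<bar> * N x"
  using assms by (simp add: is_norm_on_def)

lemma is_norm_on_nonneg:
  assumes "is_norm_on N"
  shows "0 \<le> N x"
proof -
  have "N (x + (-1) *\<^sub>R x) \<le> N x + N ((-1) *\<^sub>R x)"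
    using assms unfolding is_norm_on_def by blast
  then show ?thesis
    using is_norm_on_scaleR[OF assms, of "-1" x] is_norm_on_zero[OF assms] by simp
qed

lemma is_norm_on_pos:
  assumes "is_norm_on N" and "x \<noteq> 0"
  shows "0 < N x"
  using assms is_norm_on_nonneg[OF assms(1), of x] by (auto simp: is_norm_on_def less_le)

definition attains_dual_norm ::
    "('a::real_normed_vector \<Rightarrow> real) \<Rightarrow> ('a \<Rightarrow>\<^sub>L real) \<Rightarrow> 'a \<Rightarrow> bool"
  where "attains_dual_norm N \<zeta> u \<longleftrightarrow> (\<forall>v. \<zeta> v * N u \<le> \<zeta> u * N v)"

lemma attains_dual_norm_iff_supports_ball:
  assumes N: "is_norm_on N" and u: "u \<noteq> 0"
  shows "attains_dual_norm N \<zeta> u \<longleftrightarrow> (\<forall>v. N v \<le> N u \<longrightarrow> 0 \<le> \<zeta> (u - v))"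
proof
  assume att: "attains_dual_norm N \<zeta> u"
  have Nu: "0 < N u" using is_norm_on_pos[OF N u] .
  have "\<zeta> (- u) * N u \<le> \<zeta> u * N (- u)"
    using att unfolding attains_dual_norm_def by blast
  moreover have "N (- u) = N u" using is_norm_on_scaleR[OF N, of "-1" u] by simp
  ultimately have "0 \<le> \<zeta> u" using Nu by (simp add: blinfun.minus_right zero_le_mult_iff)
  moreover have "\<zeta> v * N u \<le> \<zeta> u * N v" for v using att by (simp add: attains_dual_norm_def)
  ultimately have "\<zeta> v * N u \<le> \<zeta> u * N u" if "N v \<le> N u" for v
    using that by (meson mult_left_mono order_trans)
  then have "\<zeta> v \<le> \<zeta> u" if "N v \<le> N u" for v
    using that Nu by simp
  then show "\<forall>v. N v \<le> N u \<longrightarrow> 0 \<le> \<zeta> (u - v)" by (simp add: blinfun.diff_right)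
next
  assume supp: "\<forall>v. N v \<le> N u \<longrightarrow> 0 \<le> \<zeta> (u - v)"
  show "attains_dual_norm N \<zeta> u" unfolding attains_dual_norm_def
  proof
    fix v
    show "\<zeta> v * N u \<le> \<zeta> u * N v"
    proof (cases "v = 0")
      case True
      then show ?thesis using is_norm_on_zero[OF N] by (simp add: blinfun.zero_right)
    next
      case False
      then have Nv: "0 < N v" using is_norm_on_pos[OF N] by blast
      have "N ((N u / N v) *\<^sub>R v) = N u"
        using Nv is_norm_on_nonneg[OF N, of u] by (simp add: is_norm_on_scaleR[OF N])
      then have "0 \<le> \<zeta> (u - (N u / N v) *\<^sub>R v)" using supp by simp
      then have "(N u / N v) * \<zeta> v \<le> \<zeta> u"
        by (simp add: blinfun.diff_right blinfun.scaleR_right)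
      then show ?thesis using Nv by (simp add: field_simps)
    qed
  qed
qed

lemma attains_dual_norm_SUP:
  assumes N: "is_norm_on N" and u: "u \<noteq> 0" and att: "attains_dual_norm N \<zeta> u"
  shows "(SUP v \<in> - {0}. ereal (\<zeta> v / N v)) = ereal (\<zeta> u / N u)"
proof (rule antisym)
  show "(SUP v \<in> - {0}. ereal (\<zeta> v / N v)) \<le> ereal (\<zeta> u / N u)"
  proof (rule SUP_least)
    fix v :: 'a
    assume "v \<in> - {0}"
    then have "0 < N v" using is_norm_on_pos[OF N] by blast
    then show "ereal (\<zeta> v / N v) \<le> ereal (\<zeta> u / N u)"
      using att is_norm_on_pos[OF N u]
      by (simp add: attains_dual_norm_def divide_simps mult.commute)
  qed
  show "ereal (\<zeta> u / N u) \<le> (SUP v \<in> - {0}. ereal (\<zeta> v / N v))"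
    using u by (intro SUP_upper) simp
qed

lemma attains_dual_norm_scaleR:
  assumes "0 < c"
  shows "attains_dual_norm N (c *\<^sub>R \<zeta>) u \<longleftrightarrow> attains_dual_norm N \<zeta> u"
  using assms by (simp add: attains_dual_norm_def blinfun.scaleR_left mult.assoc)

lemma subdiff_homogeneous_Euler:
  fixes f :: "'a::real_normed_vector \<Rightarrow> real"
  assumes hom: "\<And>t x. 0 < t \<Longrightarrow> f (t *\<^sub>R x) = t powr p * f x"
    and \<eta>: "\<eta> \<in> subdiff (\<lambda>x. ereal (f x)) u"
  shows "\<eta> u = p * f u"
proof -
  define g where "g t = (t - 1) * \<eta> u - (t powr p - 1) * f u" for t
  have deriv: "(g has_real_derivative (\<eta> u - p * f u)) (at 1)"
    unfolding g_def by (auto intro!: derivative_eq_intros)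
  have max: "\<forall>t. \<bar>1 - t\<bar> < 1 \<longrightarrow> g t \<le> g 1"
  proof (intro allI impI)
    fix t :: real
    assume "\<bar>1 - t\<bar> < 1"
    then have t: "0 < t" by simp
    have "f u + \<eta> (t *\<^sub>R u - u) \<le> f (t *\<^sub>R u)"
      using \<eta> by (simp add: subdiff_def)
    then show "g t \<le> g 1"
      using hom[OF t] by (simp add: g_def blinfun.diff_right blinfun.scaleR_right algebra_simps)
  qed
  show ?thesis using DERIV_local_max[OF deriv zero_less_one max] by simp
qed

lemma subdiff_norm_powr_iff:
  fixes N :: "'a::real_normed_vector \<Rightarrow> real"
  assumes p: "1 < p" and N: "is_norm_on N" and u: "u \<noteq> 0"
  shows "\<eta> \<in> subdiff (\<lambda>x. ereal (N x powr p / p)) u \<longleftrightarrow>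
    \<eta> u = N u powr p \<and> attains_dual_norm N \<eta> u"
proof
  assume \<eta>: "\<eta> \<in> subdiff (\<lambda>x. ereal (N x powr p / p)) u"
  have "\<eta> u = p * (N u powr p / p)"
  proof (rule subdiff_homogeneous_Euler[OF _ \<eta>])
    show "N (t *\<^sub>R x) powr p / p = t powr p * (N x powr p / p)" if "0 < t" for t x
      using that is_norm_on_nonneg[OF N] by (simp add: is_norm_on_scaleR[OF N] powr_mult)
  qed
  then have \<eta>u: "\<eta> u = N u powr p" using p by simp
  have "0 \<le> \<eta> (u - v)" if "N v \<le> N u" for v
  proof -
    have "N v powr p / p \<le> N u powr p / p"
      using that p is_norm_on_nonneg[OF N] by (simp add: divide_right_mono powr_mono2)
    moreover have "N u powr p / p + \<eta> (v - u) \<le> N v powr p / p"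
      using \<eta> by (simp add: subdiff_def)
    ultimately show ?thesis by (simp add: blinfun.diff_right)
  qed
  then show "\<eta> u = N u powr p \<and> attains_dual_norm N \<eta> u"
    using \<eta>u attains_dual_norm_iff_supports_ball[OF N u] by blast
next
  assume "\<eta> u = N u powr p \<and> attains_dual_norm N \<eta> u"
  then have \<eta>u: "\<eta> u = N u powr p" and att: "attains_dual_norm N \<eta> u" by auto
  define a where "a = N u"
  define q where "q = p / (p - 1)"
  have a: "0 < a" using is_norm_on_pos[OF N u] by (simp add: a_def)
  have q: "1 < q" "1/p + 1/q = 1" using p by (auto simp: q_def field_simps)
  have a_powr_q: "(a powr (p - 1)) powr q = a powr p"
    using p by (simp add: q_def powr_powr)
  have a_powr_div_q: "a powr p / q = a powr p - a powr p / p"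
    using p by (simp add: q_def field_simps)
  show "\<eta> \<in> subdiff (\<lambda>x. ereal (N x powr p / p)) u"
    unfolding subdiff_def
  proof (intro CollectI allI)
    fix v
    define b where "b = N v"
    have "\<eta> v * a \<le> (a powr (p - 1) * b) * a"
      using att \<eta>u a by (simp add: attains_dual_norm_def a_def b_def powr_diff)
    then have "\<eta> v \<le> b * a powr (p - 1)" using a by (simp add: mult.commute)
    also have "\<dots> \<le> b powr p / p + a powr p / q"
      using Youngs_inequality[OF p q, of b "a powr (p - 1)"] is_norm_on_nonneg[OF N]
      by (simp add: b_def a_powr_q)
    finally show "ereal (N u powr p / p) + ereal (\<eta> (v - u)) \<le> ereal (N v powr p / p)"
      using \<eta>u a_powr_div_q by (simp add: a_def b_def blinfun.diff_right)
  qed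
qed

lemma scaleR_subdiff_norm_powr_iff:
  fixes N :: "'a::real_normed_vector \<Rightarrow> real"
  assumes p: "1 < p" and N: "is_norm_on N" and u: "u \<noteq> 0" and lam: "0 < lam"
  shows "\<zeta> \<in> (\<lambda>\<eta>. lam *\<^sub>R \<eta>) ` subdiff (\<lambda>x. ereal (N x powr p / p)) u \<longleftrightarrow>
    \<zeta> u = lam * N u powr p \<and> attains_dual_norm N \<zeta> u"
proof
  assume "\<zeta> \<in> (\<lambda>\<eta>. lam *\<^sub>R \<eta>) ` subdiff (\<lambda>x. ereal (N x powr p / p)) u"
  then obtain \<eta> where "\<eta> \<in> subdiff (\<lambda>x. ereal (N x powr p / p)) u" and \<zeta>: "\<zeta> = lam *\<^sub>R \<eta>"
    by blast
  then have "\<eta> u = N u powr p" and "attains_dual_norm N \<eta> u"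
    using subdiff_norm_powr_iff[OF p N u] by auto
  then show "\<zeta> u = lam * N u powr p \<and> attains_dual_norm N \<zeta> u"
    using attains_dual_norm_scaleR[OF lam, of N \<eta> u] by (simp add: \<zeta> blinfun.scaleR_left)
next
  assume \<zeta>: "\<zeta> u = lam * N u powr p \<and> attains_dual_norm N \<zeta> u"
  then have "attains_dual_norm N ((1 / lam) *\<^sub>R \<zeta>) u"
    using attains_dual_norm_scaleR[of "1 / lam" N \<zeta> u] lam by simp
  then have "(1 / lam) *\<^sub>R \<zeta> \<in> subdiff (\<lambda>x. ereal (N x powr p / p)) u"
    using \<zeta> lam subdiff_norm_powr_iff[OF p N u] by (simp add: blinfun.scaleR_left)
  moreover have "\<zeta> = lam *\<^sub>R ((1 / lam) *\<^sub>R \<zeta>)" using lam by simp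
  ultimately show "\<zeta> \<in> (\<lambda>\<eta>. lam *\<^sub>R \<eta>) ` subdiff (\<lambda>x. ereal (N x powr p / p)) u"
    by blast
qed

lemma ereal_pos_of_growth:
  fixes x :: ereal
  assumes "0 < c" and "ereal h \<le> ereal c * x" and "0 < h"
  shows "0 < x"
  using assms by (cases x) (auto, metis less_le_trans zero_less_mult_pos)

lemma p_eigenvector_iff_attains_dual_norm:
  fixes J :: "'a::real_normed_vector \<Rightarrow> ereal" and N H :: "'a \<Rightarrow> real"
  assumes p: "1 < p" and N: "is_norm_on N" and H: "\<And>x. H x = N x powr p / p"
    and Ju: "0 < J u" and u: "u \<noteq> 0"
  shows "p_eigenvector J H u \<zeta> \<longleftrightarrow>
    \<zeta> \<in> subdiff J u \<and> attains_dual_norm N \<zeta> u \<and> ereal (\<zeta> u) = ereal p * J u"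
proof -
  have Hu: "0 < H u" using H p is_norm_on_pos[OF N u] by simp
  have Rayleigh_eq: "Rayleigh J H u = ereal lam \<longleftrightarrow> J u = ereal (lam * H u)" for lam
    using Hu by (simp add: Rayleigh_def ereal_divide_eq mult.commute)
  have lam_pos: "0 < lam" if "J u = ereal (lam * H u)" for lam
    using that Ju Hu by (simp add: zero_less_mult_iff)
  have subdiff_H: "\<zeta> \<in> (\<lambda>\<eta>. lam *\<^sub>R \<eta>) ` subdiff (\<lambda>x. ereal (H x)) u \<longleftrightarrow>
      \<zeta> u = p * (lam * H u) \<and> attains_dual_norm N \<zeta> u" if "0 < lam" for lam
    using scaleR_subdiff_norm_powr_iff[OF p N u that] p by (simp add: H)
  show ?thesis
  proof
    assume "p_eigenvector J H u \<zeta>"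
    then obtain lam where "\<zeta> \<in> subdiff J u" and J: "J u = ereal (lam * H u)"
      and "\<zeta> \<in> (\<lambda>\<eta>. lam *\<^sub>R \<eta>) ` subdiff (\<lambda>x. ereal (H x)) u"
      unfolding p_eigenvector_def Rayleigh_eq by blast
    then show "\<zeta> \<in> subdiff J u \<and> attains_dual_norm N \<zeta> u \<and> ereal (\<zeta> u) = ereal p * J u"
      using subdiff_H[OF lam_pos[OF J]] by simp
  next
    assume \<zeta>: "\<zeta> \<in> subdiff J u \<and> attains_dual_norm N \<zeta> u \<and> ereal (\<zeta> u) = ereal p * J u"
    define lam where "lam = \<zeta> u / (p * H u)"
    have J: "J u = ereal (lam * H u)"
      using \<zeta> p Hu by (cases "J u") (auto simp: lam_def)
    moreover have "\<zeta> \<in> (\<lambda>\<eta>. lam *\<^sub>R \<eta>) ` subdiff (\<lambda>x. ereal (H x)) u"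
      using \<zeta> p Hu subdiff_H[OF lam_pos[OF J]] by (simp add: lam_def)
    ultimately show "p_eigenvector J H u \<zeta>"
      using \<zeta> u unfolding p_eigenvector_def Rayleigh_eq by blast
  qed
qed

theorem proposition2p5:
  fixes J :: "'a::banach \<Rightarrow> ereal" and H :: "'a \<Rightarrow> real" and p q c :: real
    and u :: 'a and \<zeta> :: "'a \<Rightarrow>\<^sub>L real"
  assumes refl: "reflexive_space TYPE('a)"
    and p: "1 < p" and q: "q = p / (p - 1)"
    and J: "Gamma0 J"
    and H: "Gamma0 (\<lambda>x. ereal (H x))"
    and Hhom: "\<forall>t x. H (t *\<^sub>R x) = \<bar>t\<bar> powr p * H x"
    and Hnorm: "is_norm_on (Hnorm p H)"
    and growth: "c > 0" "\<forall>x. ereal (H x) \<le> ereal c * J x"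
    and u: "u \<noteq> 0"
  shows "(p_eigenvector J H u \<zeta> \<longleftrightarrow>
            \<zeta> \<in> subdiff J u
          \<and> (\<forall>v. Hnorm p H v \<le> Hnorm p H u \<longrightarrow> blinfun_apply \<zeta> (u - v) \<ge> 0)
          \<and> Hdualnorm p H \<zeta> * ereal (Hnorm p H u) = ereal p * J u)
       \<and> ((\<forall>v. Hnorm p H v \<le> Hnorm p H u \<longrightarrow> blinfun_apply \<zeta> (u - v) \<ge> 0)
            \<longrightarrow> ereal (blinfun_apply \<zeta> u) = Hdualnorm p H \<zeta> * ereal (Hnorm p H u))"
proof -
  define N where "N = Hnorm p H"
  have "0 \<le> H x" for x
  proof (rule convex_fun_even_nonneg[of H])
    show "convex_fun (\<lambda>x. ereal (H x))" using H by (simp add: Gamma0_def)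
    show "H (- x) = H x" using Hhom[rule_format, of "-1" x] by simp
    show "H 0 = 0" using Hhom[rule_format, of 0 0] by simp
  qed
  then have HN: "H x = N x powr p / p" for x
    using Hnorm_powr[of p H x] p by (simp add: N_def)
  have Ju: "0 < J u"
    using ereal_pos_of_growth[OF growth(1) growth(2)[rule_format, of u]]
      HN p is_norm_on_pos[OF Hnorm u] by (simp add: N_def)
  have dual: "Hdualnorm p H \<zeta> * ereal (N u) = ereal (\<zeta> u)" if "attains_dual_norm N \<zeta> u"
    using attains_dual_norm_SUP[OF Hnorm u that[unfolded N_def]] is_norm_on_pos[OF Hnorm u]
    by (simp add: Hdualnorm_def N_def)
  show ?thesis
    using p_eigenvector_iff_attains_dual_norm[where J = J, OF p Hnorm[folded N_def] HN Ju u]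
      attains_dual_norm_iff_supports_ball[OF Hnorm[folded N_def] u] dual
    unfolding N_def by auto
qed

end
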